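(* Let $\phi$ be a partial flow on a metric space $X$. Every isolated set $\Lambda$ of $\phi$ admits a catenary function.
   Context: A partial flow on a metric space $X$ is a continuous map $\phi\colon\Gamma\to X$ on an open set $\Gamma\subset\mathbb{R}\times X$. Here $\Gamma_x=\{t:(t,x)\in\Gamma\}$ is a connected set containing $0$, $\Gamma_{\phi_t(x)}=\Gamma_x-t$, $\phi_0=\mathrm{id}$, and $\phi_s\phi_t=\phi_{s+t}$ where defined. A $\phi$-invariant set $\Lambda$ is isolated if there is a compact neighborhood $N$ (an isolating neighborhood) such that $\phi_{\Gamma_x}(x)\subseteq N$ implies $x\in\Lambda$. $\dot{\mathcal L}(x)=\lim_{t\to0}(\mathcal L(\phi_t(x))-\mathcal L(x))/t$ and $\ddot{\mathcal L}=(\dot{\mathcal L})^{\cdot}$. A catenary function for $\Lambda$ is a continuous $\mathcal L\colon N\to\mathbb{R}$, with $N$ an isolating neighborhood of $\Lambda$, such that $\mathcal L(\Lambda)=0$, $\mathcal L(x)>0$ for $x\in N\setminus\Lambda$, and $\ddot{\mathcal L}=\mathcal L$ on $N$. *)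

theory Defs
  imports "HOL-Analysis.Analysis"
begin

definition dom_at :: "(real \<times> 'a) set \<Rightarrow> 'a \<Rightarrow> real set" where
  "dom_at \<Gamma> x = {t. (t, x) \<in> \<Gamma>}"

definition partial_flow :: "(real \<times> 'a::metric_space) set \<Rightarrow> (real \<times> 'a \<Rightarrow> 'a) \<Rightarrow> bool" where
  "partial_flow \<Gamma> \<phi> \<longleftrightarrow>
     open \<Gamma> \<and> continuous_on \<Gamma> \<phi> \<and>
     (\<forall>x. 0 \<in> dom_at \<Gamma> x \<and> connected (dom_at \<Gamma> x)) \<and>
     (\<forall>t x. (t, x) \<in> \<Gamma> \<longrightarrow> dom_at \<Gamma> (\<phi> (t, x)) = (\<lambda>s. s - t) ` dom_at \<Gamma> x) \<and>
     (\<forall>x. \<phi> (0, x) = x) \<and>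
     (\<forall>s t x. (t, x) \<in> \<Gamma> \<longrightarrow> (s, \<phi> (t, x)) \<in> \<Gamma> \<longrightarrow> \<phi> (s, \<phi> (t, x)) = \<phi> (s + t, x))"

definition invariant_set :: "(real \<times> 'a) set \<Rightarrow> (real \<times> 'a \<Rightarrow> 'a) \<Rightarrow> 'a set \<Rightarrow> bool" where
  "invariant_set \<Gamma> \<phi> \<Lambda> \<longleftrightarrow> (\<forall>x\<in>\<Lambda>. \<forall>t\<in>dom_at \<Gamma> x. \<phi> (t, x) \<in> \<Lambda>)"

definition isolating_nbhd :: "(real \<times> 'a::metric_space) set \<Rightarrow> (real \<times> 'a \<Rightarrow> 'a) \<Rightarrow> 'a set \<Rightarrow> 'a set \<Rightarrow> bool" where
  "isolating_nbhd \<Gamma> \<phi> \<Lambda> N \<longleftrightarrow> compact N \<and> \<Lambda> \<subseteq> interior N \<and>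
     (\<forall>x. (\<lambda>t. \<phi> (t, x)) ` dom_at \<Gamma> x \<subseteq> N \<longrightarrow> x \<in> \<Lambda>)"

definition isolated_set :: "(real \<times> 'a::metric_space) set \<Rightarrow> (real \<times> 'a \<Rightarrow> 'a) \<Rightarrow> 'a set \<Rightarrow> bool" where
  "isolated_set \<Gamma> \<phi> \<Lambda> \<longleftrightarrow> invariant_set \<Gamma> \<phi> \<Lambda> \<and> (\<exists>N. isolating_nbhd \<Gamma> \<phi> \<Lambda> N)"

definition has_orbital_deriv ::
  "(real \<times> 'a) set \<Rightarrow> (real \<times> 'a \<Rightarrow> 'a) \<Rightarrow> 'a set \<Rightarrow> ('a \<Rightarrow> real) \<Rightarrow> real \<Rightarrow> 'a \<Rightarrow> bool" where
  "has_orbital_deriv \<Gamma> \<phi> N L D x \<longleftrightarrow>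
     ((\<lambda>t. (L (\<phi> (t, x)) - L x) / t) \<longlongrightarrow> D)
       (at 0 within {t \<in> dom_at \<Gamma> x. \<phi> (t, x) \<in> N})"

definition catenary_function ::
  "(real \<times> 'a::metric_space) set \<Rightarrow> (real \<times> 'a \<Rightarrow> 'a) \<Rightarrow> 'a set \<Rightarrow> 'a set \<Rightarrow> ('a \<Rightarrow> real) \<Rightarrow> bool" where
  "catenary_function \<Gamma> \<phi> \<Lambda> N L \<longleftrightarrow>
     isolating_nbhd \<Gamma> \<phi> \<Lambda> N \<and> continuous_on N L \<and>
     (\<forall>x\<in>\<Lambda>. L x = 0) \<and> (\<forall>x\<in>N - \<Lambda>. L x > 0) \<and>
     (\<exists>Ld. (\<forall>x\<in>N. has_orbital_deriv \<Gamma> \<phi> N L (Ld x) x) \<and>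
           (\<forall>x\<in>N. has_orbital_deriv \<Gamma> \<phi> N Ld (L x) x))"

end

theory Submission
  imports Defs
begin

text \<open>Choose a continuous cutoff k with values in [0, 1] that vanishes near \<Lambda> and equals 1
  outside an isolating neighbourhood N, and let P x be the supremum of e^-t k (\<phi>_t x) over
  t \<ge> 0, Q the same for the time-reversed flow. Invariance of \<Lambda> gives P = Q = 0 on \<Lambda>, and a
  point outside \<Lambda> leaves N forwards or backwards, so P + Q > 0 there. P and Q are continuous
  because an orbit of a partial flow can only cease to exist after it has left the compact set N.
  On a smaller isolating neighbourhood N' the cutoff vanishes along short orbit pieces, so
  P (\<phi>_t x) = e^t P x and Q (\<phi>_t x) = e^-t Q x for small t; hence L = P + Q has orbital
  derivative P - Q, whose orbital derivative is L again.\<close>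

section \<open>Partial flows\<close>

lemma partial_flow_open: "partial_flow \<Gamma> \<phi> \<Longrightarrow> open \<Gamma>"
  by (simp add: partial_flow_def)

lemma partial_flow_zero_mem: "partial_flow \<Gamma> \<phi> \<Longrightarrow> (0, x) \<in> \<Gamma>"
  by (simp add: partial_flow_def dom_at_def)

lemma partial_flow_zero: "partial_flow \<Gamma> \<phi> \<Longrightarrow> \<phi> (0, x) = x"
  by (simp add: partial_flow_def)

lemma partial_flow_isCont: "partial_flow \<Gamma> \<phi> \<Longrightarrow> p \<in> \<Gamma> \<Longrightarrow> isCont \<phi> p"
  using continuous_on_eq_continuous_at[of \<Gamma> \<phi>] by (simp add: partial_flow_def)

lemma partial_flow_mem_between:
  assumes "partial_flow \<Gamma> \<phi>" "(a, x) \<in> \<Gamma>" "(b, x) \<in> \<Gamma>" "a \<le> s" "s \<le> b"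
  shows "(s, x) \<in> \<Gamma>"
proof -
  have "connected (dom_at \<Gamma> x)" using assms(1) by (simp add: partial_flow_def)
  then show ?thesis using assms(2-) unfolding connected_iff_interval dom_at_def by blast
qed

lemma partial_flow_mem_flow_iff:
  assumes "partial_flow \<Gamma> \<phi>" "(t, x) \<in> \<Gamma>"
  shows "(v, \<phi> (t, x)) \<in> \<Gamma> \<longleftrightarrow> (v + t, x) \<in> \<Gamma>"
proof -
  have "dom_at \<Gamma> (\<phi> (t, x)) = (\<lambda>s. s - t) ` dom_at \<Gamma> x"
    using assms by (simp add: partial_flow_def)
  then have "v \<in> dom_at \<Gamma> (\<phi> (t, x)) \<longleftrightarrow> v \<in> (\<lambda>s. s - t) ` dom_at \<Gamma> x" by simp
  also have "\<dots> \<longleftrightarrow> v + t \<in> dom_at \<Gamma> x"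
    by (auto simp: image_iff intro!: bexI[of _ "v + t"])
  finally show ?thesis by (simp add: dom_at_def)
qed

lemma partial_flow_flow_flow:
  "partial_flow \<Gamma> \<phi> \<Longrightarrow> (t, x) \<in> \<Gamma> \<Longrightarrow> (s, \<phi> (t, x)) \<in> \<Gamma> \<Longrightarrow> \<phi> (s, \<phi> (t, x)) = \<phi> (s + t, x)"
  by (simp add: partial_flow_def)

definition flip_time :: "real \<times> 'a \<Rightarrow> real \<times> 'a" where
  "flip_time p = (- fst p, snd p)"

lemma flip_time_simps [simp]:
  "flip_time (t, x) = (- t, x)" "(t, x) \<in> flip_time -` \<Gamma> \<longleftrightarrow> (- t, x) \<in> \<Gamma>"
  by (simp_all add: flip_time_def)

lemma partial_flow_flip_time:
  assumes pf: "partial_flow \<Gamma> \<phi>"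
  shows "partial_flow (flip_time -` \<Gamma>) (\<phi> \<circ> flip_time)"
  unfolding partial_flow_def
proof (intro conjI allI impI)
  have flip_cont: "continuous_on A flip_time" for A :: "(real \<times> 'a) set"
    unfolding flip_time_def by (intro continuous_intros)
  show "open (flip_time -` \<Gamma>)"
    using open_vimage[OF partial_flow_open[OF pf] flip_cont] .
  have "continuous_on \<Gamma> \<phi>" using pf by (simp add: partial_flow_def)
  then show "continuous_on (flip_time -` \<Gamma>) (\<phi> \<circ> flip_time)"
    by (intro continuous_on_compose flip_cont continuous_on_subset[OF _ image_vimage_subset])
  fix x
  show "0 \<in> dom_at (flip_time -` \<Gamma>) x"
    using partial_flow_zero_mem[OF pf] by (simp add: dom_at_def)
  show "connected (dom_at (flip_time -` \<Gamma>) x)"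
    unfolding connected_iff_interval
  proof (intro ballI allI impI)
    fix a b s assume "a \<in> dom_at (flip_time -` \<Gamma>) x" "b \<in> dom_at (flip_time -` \<Gamma>) x" "a \<le> s" "s \<le> b"
    then have "(- b, x) \<in> \<Gamma>" "(- a, x) \<in> \<Gamma>" "- b \<le> - s" "- s \<le> - a"
      by (simp_all add: dom_at_def)
    from partial_flow_mem_between[OF pf this] show "s \<in> dom_at (flip_time -` \<Gamma>) x"
      by (simp add: dom_at_def)
  qed
  show "(\<phi> \<circ> flip_time) (0, x) = x"
    using partial_flow_zero[OF pf] by simp
  fix t assume tx: "(t, x) \<in> flip_time -` \<Gamma>"
  then have mtx: "(- t, x) \<in> \<Gamma>" by simp
  show "dom_at (flip_time -` \<Gamma>) ((\<phi> \<circ> flip_time) (t, x)) = (\<lambda>s. s - t) ` dom_at (flip_time -` \<Gamma>) x"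
  proof (intro set_eqI)
    fix v
    have "v \<in> dom_at (flip_time -` \<Gamma>) ((\<phi> \<circ> flip_time) (t, x)) \<longleftrightarrow> (- v + - t, x) \<in> \<Gamma>"
      using partial_flow_mem_flow_iff[OF pf mtx, of "- v"] by (simp add: dom_at_def)
    also have "\<dots> \<longleftrightarrow> v \<in> (\<lambda>s. s - t) ` dom_at (flip_time -` \<Gamma>) x"
      by (auto simp: dom_at_def image_iff intro!: exI[of _ "v + t"])
    finally show "v \<in> dom_at (flip_time -` \<Gamma>) ((\<phi> \<circ> flip_time) (t, x)) \<longleftrightarrow>
      v \<in> (\<lambda>s. s - t) ` dom_at (flip_time -` \<Gamma>) x" .
  qed
  fix s assume "(s, (\<phi> \<circ> flip_time) (t, x)) \<in> flip_time -` \<Gamma>"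
  then have "(- s, \<phi> (- t, x)) \<in> \<Gamma>" by simp
  from partial_flow_flow_flow[OF pf mtx this]
  show "(\<phi> \<circ> flip_time) (s, (\<phi> \<circ> flip_time) (t, x)) = (\<phi> \<circ> flip_time) (s + t, x)"
    by simp
qed

lemma partial_flow_uniform_time:
  assumes pf: "partial_flow \<Gamma> \<phi>" and K: "compact K"
  obtains d where "d > 0" "\<And>s y. \<bar>s\<bar> < d \<Longrightarrow> y \<in> K \<Longrightarrow> (s, y) \<in> \<Gamma>"
proof -
  have "{0} \<times> K \<subseteq> \<Gamma>" using partial_flow_zero_mem[OF pf] by auto
  then obtain T :: "real set" where "0 \<in> T" "open T" "T \<times> K \<subseteq> \<Gamma>"
    using Elementary_Topology.tube_lemma[OF K partial_flow_open[OF pf]] by blast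
  obtain d where "d > 0" "ball 0 d \<subseteq> T"
    using \<open>open T\<close> \<open>0 \<in> T\<close> open_contains_ball by blast
  show ?thesis
  proof (rule that[OF \<open>d > 0\<close>])
    fix s y assume "\<bar>s\<bar> < d" "y \<in> K"
    then have "s \<in> T" using \<open>ball 0 d \<subseteq> T\<close> by (auto simp: dist_real_def)
    then show "(s, y) \<in> \<Gamma>" using \<open>T \<times> K \<subseteq> \<Gamma>\<close> \<open>y \<in> K\<close> by blast
  qed
qed

text \<open>The uniform time of existence over N lets the orbit be continued in steps of fixed
  length as long as it stays in N.\<close>
lemma partial_flow_leaves_compact:
  assumes pf: "partial_flow \<Gamma> \<phi>" and N: "compact N" and "0 \<le> v" "(v, x) \<notin> \<Gamma>"
  obtains r where "0 \<le> r" "r < v" "(r, x) \<in> \<Gamma>" "\<phi> (r, x) \<notin> N"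
proof (rule ccontr)
  note exit = that
  assume "\<not> thesis"
  then have stays: "\<phi> (r, x) \<in> N" if "0 \<le> r" "r < v" "(r, x) \<in> \<Gamma>" for r
    using exit[of r] that by blast
  obtain d where d: "d > 0" "\<And>s y. \<bar>s\<bar> < d \<Longrightarrow> y \<in> N \<Longrightarrow> (s, y) \<in> \<Gamma>"
    using partial_flow_uniform_time[OF pf N] by blast
  have "(min (real n * (d / 2)) v, x) \<in> \<Gamma>" for n
  proof (induction n)
    case 0
    then show ?case using \<open>0 \<le> v\<close> partial_flow_zero_mem[OF pf] by simp
  next
    case (Suc n)
    define r where "r = min (real n * (d / 2)) v"
    show ?case
    proof (cases "r = v")
      case True
      then show ?thesis using Suc d(1) by (simp add: r_def min_def algebra_simps split: if_splits)
    next
      case False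
      then have "r < v" "0 \<le> r" using \<open>0 \<le> v\<close> d(1) by (auto simp: r_def)
      then have "(d / 2, \<phi> (r, x)) \<in> \<Gamma>"
        using d stays Suc by (simp add: r_def)
      then have "(d / 2 + r, x) \<in> \<Gamma>"
        using partial_flow_mem_flow_iff[OF pf Suc[folded r_def]] by simp
      then show ?thesis
        using partial_flow_mem_between[OF pf partial_flow_zero_mem[OF pf]] \<open>0 \<le> r\<close> \<open>0 \<le> v\<close> d(1)
        by (simp add: r_def min_def algebra_simps split: if_splits)
    qed
  qed
  moreover obtain n where "v / (d / 2) < real n" using reals_Archimedean2 by blast
  then have "min (real n * (d / 2)) v = v" using d(1) by (simp add: field_simps)
  ultimately show False using \<open>(v, x) \<notin> \<Gamma>\<close> by metis
qed

section \<open>Isolating neighbourhoods\<close>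

lemma isolating_nbhd_subset:
  assumes "isolating_nbhd \<Gamma> \<phi> \<Lambda> N" "N' \<subseteq> N" "compact N'" "\<Lambda> \<subseteq> interior N'"
  shows "isolating_nbhd \<Gamma> \<phi> \<Lambda> N'"
  using assms unfolding isolating_nbhd_def by blast

lemma isolated_invariant_compact:
  assumes pf: "partial_flow \<Gamma> \<phi>" and inv: "invariant_set \<Gamma> \<phi> \<Lambda>"
    and iso: "isolating_nbhd \<Gamma> \<phi> \<Lambda> N"
  shows "compact \<Lambda>"
proof -
  have N: "compact N" "\<Lambda> \<subseteq> N" and isolates: "\<And>x. (\<lambda>t. \<phi> (t, x)) ` dom_at \<Gamma> x \<subseteq> N \<Longrightarrow> x \<in> \<Lambda>"
    using iso interior_subset by (auto simp: isolating_nbhd_def)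
  have "x \<in> \<Lambda>" if x: "x \<in> closure \<Lambda>" for x
  proof (rule isolates, clarsimp simp: dom_at_def)
    fix t assume tx: "(t, x) \<in> \<Gamma>"
    show "\<phi> (t, x) \<in> N"
    proof (rule ccontr)
      assume "\<phi> (t, x) \<notin> N"
      define U where "U = \<phi> -` (- N) \<inter> \<Gamma>"
      have "continuous_on \<Gamma> \<phi>" using pf by (simp add: partial_flow_def)
      moreover have "open (- N)" using compact_imp_closed[OF N(1)] by (simp add: open_Compl)
      ultimately have "open U"
        using continuous_on_open_vimage[OF partial_flow_open[OF pf]] unfolding U_def by blast
      then have "open (Pair t -` U)" by (rule open_vimage) (intro continuous_intros)
      moreover have "x \<in> Pair t -` U" using tx \<open>\<phi> (t, x) \<notin> N\<close> by (simp add: U_def)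
      ultimately obtain y where "y \<in> \<Lambda>" "(t, y) \<in> \<Gamma>" "\<phi> (t, y) \<notin> N"
        using x unfolding closure_iff_nhds_not_empty U_def by blast
      then show False using inv N(2) by (auto simp: invariant_set_def dom_at_def)
    qed
  qed
  then have "closed \<Lambda>" using closure_subset_eq by blast
  with N(1) have "compact (N \<inter> \<Lambda>)" by (rule compact_Int_closed)
  moreover have "N \<inter> \<Lambda> = \<Lambda>" using N(2) by blast
  ultimately show ?thesis by simp
qed

lemma isolating_nbhd_cutoff:
  assumes iso: "isolating_nbhd \<Gamma> \<phi> \<Lambda> N" and "compact \<Lambda>"
  obtains N' U and k :: "'a::metric_space \<Rightarrow> real"
  where "isolating_nbhd \<Gamma> \<phi> \<Lambda> N'" "open U" "N' \<subseteq> U" "\<And>y. y \<in> U \<Longrightarrow> k y = 0"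
    "continuous_on UNIV k" "range k \<subseteq> {0..1}" "\<And>y. y \<notin> N \<Longrightarrow> k y = 1"
proof (cases "\<Lambda> = {}")
  case True
  have "isolating_nbhd \<Gamma> \<phi> \<Lambda> {}" using isolating_nbhd_subset[OF iso] True by simp
  then show ?thesis by (rule that[where U = "{}" and k = "\<lambda>_. 1"]) simp_all
next
  case False
  have N: "compact N" "\<Lambda> \<subseteq> interior N" using iso by (auto simp: isolating_nbhd_def)
  obtain e0 where e0: "e0 > 0" "(\<Union>a\<in>\<Lambda>. ball a e0) \<subseteq> interior N"
    using compact_subset_open_imp_ball_epsilon_subset[OF \<open>compact \<Lambda>\<close> open_interior N(2)] by blast
  have near: "y \<in> N" if "infdist y \<Lambda> < e0" for y
  proof -
    have "(INF a\<in>\<Lambda>. dist y a) < e0" using that infdist_notempty[OF False] by simp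
    then obtain a where "a \<in> \<Lambda>" "dist y a < e0"
      using cINF_less_iff[OF False, of "dist y" e0] by (auto intro: bdd_belowI[of _ 0])
    then have "y \<in> interior N" using that e0(2) by (force simp: dist_commute)
    then show ?thesis using interior_subset by blast
  qed
  define e where "e = e0 / 3"
  have e: "e > 0" using e0(1) by (simp add: e_def)
  define N' where "N' = {y. infdist y \<Lambda> \<le> e}"
  define U where "U = {y. infdist y \<Lambda> < 2 * e}"
  define k where "k y = min 1 (max 0 (infdist y \<Lambda> / e - 2))" for y
  have cont_infdist: "continuous_on UNIV (\<lambda>y. infdist y \<Lambda>)"
    by (intro continuous_intros)
  have "N' \<subseteq> N" using near e by (auto simp: N'_def e_def)
  moreover have "compact N'"
  proof -
    have "closed N'" unfolding N'_def by (rule closed_Collect_le[OF cont_infdist continuous_on_const])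
    with N(1) have "compact (N \<inter> N')" by (rule compact_Int_closed)
    then show ?thesis using \<open>N' \<subseteq> N\<close> by (simp add: Int_absorb1)
  qed
  moreover have "\<Lambda> \<subseteq> interior N'"
  proof -
    have "open {y. infdist y \<Lambda> < e}" by (rule open_Collect_less[OF cont_infdist continuous_on_const])
    moreover have "{y. infdist y \<Lambda> < e} \<subseteq> N'" by (auto simp: N'_def)
    ultimately have "{y. infdist y \<Lambda> < e} \<subseteq> interior N'" by (metis interior_maximal)
    moreover have "\<Lambda> \<subseteq> {y. infdist y \<Lambda> < e}" using e by auto
    ultimately show ?thesis by blast
  qed
  ultimately have "isolating_nbhd \<Gamma> \<phi> \<Lambda> N'" by (rule isolating_nbhd_subset[OF iso])
  then show ?thesis
  proof (rule that)
    show "open U" unfolding U_def by (rule open_Collect_less[OF cont_infdist continuous_on_const])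
    show "N' \<subseteq> U" using e by (auto simp: N'_def U_def)
    show "k y = 0" if "y \<in> U" for y using that e by (simp add: U_def k_def field_simps)
    show "continuous_on UNIV k" unfolding k_def using e by (intro continuous_intros) auto
    show "range k \<subseteq> {0..1}" by (auto simp: k_def)
    show "k y = 1" if "y \<notin> N" for y
    proof -
      have "3 * e \<le> infdist y \<Lambda>" using near[of y] that by (force simp: e_def)
      then have "1 \<le> infdist y \<Lambda> / e - 2" using e by (simp add: field_simps)
      then show ?thesis by (simp add: k_def)
    qed
  qed
qed

section \<open>Discounted suprema along orbits\<close>

lemma isCont_tendsto_nhds: "isCont f x \<Longrightarrow> (f \<longlongrightarrow> f x) (nhds x)"
  by (simp add: isCont_def tendsto_at_iff_tendsto_nhds)

definition discounted_sup :: "(real \<times> 'a) set \<Rightarrow> (real \<times> 'a \<Rightarrow> 'a) \<Rightarrow> ('a \<Rightarrow> real) \<Rightarrow> 'a \<Rightarrow> real" where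
  "discounted_sup \<Gamma> \<phi> k x = (SUP v\<in>{v. (v, x) \<in> \<Gamma> \<and> 0 \<le> v}. exp (- v) * k (\<phi> (v, x)))"

lemma discounted_sup_bdd_above:
  fixes \<Gamma> :: "(real \<times> 'a) set" and \<phi> :: "real \<times> 'a \<Rightarrow> 'a" and k :: "'a \<Rightarrow> real"
  assumes "range k \<subseteq> {0..1}"
  shows "bdd_above ((\<lambda>v. exp (- v) * k (\<phi> (v, x))) ` {v. (v, x) \<in> \<Gamma> \<and> 0 \<le> v})"
proof (rule bdd_aboveI[of _ 1], clarify)
  fix v :: real assume "0 \<le> v"
  then have "exp (- v) \<le> 1" by simp
  moreover have "0 \<le> k (\<phi> (v, x))" "k (\<phi> (v, x)) \<le> 1" using assms by (auto simp: image_subset_iff)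
  ultimately show "exp (- v) * k (\<phi> (v, x)) \<le> 1" by (simp add: mult_le_one)
qed

lemma discounted_sup_upper:
  fixes \<Gamma> :: "(real \<times> 'a) set" and \<phi> :: "real \<times> 'a \<Rightarrow> 'a" and k :: "'a \<Rightarrow> real"
  assumes "range k \<subseteq> {0..1}" "(v, x) \<in> \<Gamma>" "0 \<le> v"
  shows "exp (- v) * k (\<phi> (v, x)) \<le> discounted_sup \<Gamma> \<phi> k x"
  unfolding discounted_sup_def
  by (rule cSUP_upper) (use assms discounted_sup_bdd_above[OF assms(1)] in auto)

lemma discounted_sup_least:
  fixes \<Gamma> :: "(real \<times> 'a::metric_space) set" and \<phi> :: "real \<times> 'a \<Rightarrow> 'a" and k :: "'a \<Rightarrow> real"
  assumes "partial_flow \<Gamma> \<phi>" "\<And>v. (v, x) \<in> \<Gamma> \<Longrightarrow> 0 \<le> v \<Longrightarrow> exp (- v) * k (\<phi> (v, x)) \<le> c"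
  shows "discounted_sup \<Gamma> \<phi> k x \<le> c"
  unfolding discounted_sup_def
  by (rule cSUP_least) (use assms partial_flow_zero_mem[OF assms(1)] in auto)

lemma discounted_sup_nonneg:
  fixes \<Gamma> :: "(real \<times> 'a::metric_space) set" and \<phi> :: "real \<times> 'a \<Rightarrow> 'a" and k :: "'a \<Rightarrow> real"
  assumes "partial_flow \<Gamma> \<phi>" "range k \<subseteq> {0..1}"
  shows "0 \<le> discounted_sup \<Gamma> \<phi> k x"
proof -
  have "0 \<le> k x" using assms(2) by (auto simp: image_subset_iff)
  also have "k x \<le> discounted_sup \<Gamma> \<phi> k x"
    using discounted_sup_upper[OF assms(2) partial_flow_zero_mem[OF assms(1)], where \<phi> = \<phi>]
    by (simp add: partial_flow_zero[OF assms(1)])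
  finally show ?thesis .
qed

lemma discounted_sup_pos:
  fixes \<Gamma> :: "(real \<times> 'a) set" and \<phi> :: "real \<times> 'a \<Rightarrow> 'a" and k :: "'a \<Rightarrow> real"
  assumes "range k \<subseteq> {0..1}" "(v, x) \<in> \<Gamma>" "0 \<le> v" "k (\<phi> (v, x)) = 1"
  shows "0 < discounted_sup \<Gamma> \<phi> k x"
proof -
  have "exp (- v) \<le> discounted_sup \<Gamma> \<phi> k x"
    using discounted_sup_upper[OF assms(1-3), where \<phi> = \<phi>] assms(4) by simp
  then show ?thesis using exp_gt_zero[of "- v"] by linarith
qed

lemma discounted_sup_eq_0:
  fixes \<Gamma> :: "(real \<times> 'a::metric_space) set" and \<phi> :: "real \<times> 'a \<Rightarrow> 'a" and k :: "'a \<Rightarrow> real"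
  assumes "partial_flow \<Gamma> \<phi>" "range k \<subseteq> {0..1}" "\<And>v. (v, x) \<in> \<Gamma> \<Longrightarrow> k (\<phi> (v, x)) = 0"
  shows "discounted_sup \<Gamma> \<phi> k x = 0"
  using discounted_sup_least[OF assms(1), of x k 0] discounted_sup_nonneg[OF assms(1,2), of x] assms(3)
  by simp

lemma discounted_sup_lower_semicontinuous:
  fixes \<Gamma> :: "(real \<times> 'a::metric_space) set" and \<phi> :: "real \<times> 'a \<Rightarrow> 'a" and k :: "'a \<Rightarrow> real"
  assumes pf: "partial_flow \<Gamma> \<phi>" and k: "continuous_on UNIV k" "range k \<subseteq> {0..1}"
    and c: "c < discounted_sup \<Gamma> \<phi> k x"
  shows "\<forall>\<^sub>F y in nhds x. c < discounted_sup \<Gamma> \<phi> k y"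
proof -
  have "{v. (v, x) \<in> \<Gamma> \<and> 0 \<le> v} \<noteq> {}" using partial_flow_zero_mem[OF pf] by blast
  from c[unfolded discounted_sup_def less_cSUP_iff[OF this discounted_sup_bdd_above[OF k(2)]]]
  obtain v where v: "(v, x) \<in> \<Gamma>" "0 \<le> v" "c < exp (- v) * k (\<phi> (v, x))"
    by blast
  have "isCont (\<lambda>y. exp (- v) * k (\<phi> (v, y))) x"
    using k(1) partial_flow_isCont[OF pf v(1)]
    by (intro continuous_intros isCont_o2[where f = "Pair v" and g = \<phi>] isCont_o2[where f = "\<lambda>y. \<phi> (v, y)" and g = k])
      (simp_all add: continuous_on_eq_continuous_at)
  then have "\<forall>\<^sub>F y in nhds x. c < exp (- v) * k (\<phi> (v, y))"
    using v(3) by (rule order_tendstoD(1)[OF isCont_tendsto_nhds])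
  moreover have "open (Pair v -` \<Gamma>)"
    by (rule open_vimage[OF partial_flow_open[OF pf]]) (intro continuous_intros)
  then have "\<forall>\<^sub>F y in nhds x. (v, y) \<in> \<Gamma>"
    using eventually_nhds_in_open[of "Pair v -` \<Gamma>" x] v(1) by simp
  ultimately show ?thesis
  proof eventually_elim
    case (elim y)
    then show ?case using discounted_sup_upper[OF k(2) elim(2) v(2), where \<phi> = \<phi>] by linarith
  qed
qed

text \<open>Near a time w where the orbit is defined the bound comes from continuity; where it is
  not, the orbit has already left N (where k = 1) at some earlier time r, and the weight
  exp (- r) collected there dominates everything that comes later.\<close>
lemma discounted_sup_upper_bound_near:
  fixes \<Gamma> :: "(real \<times> 'a::metric_space) set" and \<phi> :: "real \<times> 'a \<Rightarrow> 'a" and k :: "'a \<Rightarrow> real"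
  assumes pf: "partial_flow \<Gamma> \<phi>" and N: "compact N"
    and k: "continuous_on UNIV k" "range k \<subseteq> {0..1}" "\<And>y. y \<notin> N \<Longrightarrow> k y = 1"
    and "0 \<le> w" and c: "discounted_sup \<Gamma> \<phi> k x < c"
  shows "\<forall>\<^sub>F p in nhds (x, w). (snd p, fst p) \<in> \<Gamma> \<longrightarrow> exp (- snd p) * k (\<phi> (snd p, fst p)) < c"
proof (cases "(w, x) \<in> \<Gamma>")
  case True
  have "isCont (\<lambda>p. exp (- snd p) * k (\<phi> (snd p, fst p))) (x, w)"
    using k(1) partial_flow_isCont[OF pf True]
    by (intro continuous_intros isCont_o2[where f = "\<lambda>p. (snd p, fst p)" and g = \<phi>]
        isCont_o2[where f = "\<lambda>p. \<phi> (snd p, fst p)" and g = k])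
      (simp_all add: continuous_on_eq_continuous_at)
  moreover have "exp (- w) * k (\<phi> (w, x)) < c"
    using discounted_sup_upper[OF k(2) True \<open>0 \<le> w\<close>, where \<phi> = \<phi>] c by linarith
  ultimately have "\<forall>\<^sub>F p in nhds (x, w). exp (- snd p) * k (\<phi> (snd p, fst p)) < c"
    using order_tendstoD(2)[OF isCont_tendsto_nhds] by fastforce
  then show ?thesis by (rule eventually_mono) simp
next
  case False
  obtain r where r: "0 \<le> r" "r < w" "(r, x) \<in> \<Gamma>" "\<phi> (r, x) \<notin> N"
    using partial_flow_leaves_compact[OF pf N \<open>0 \<le> w\<close> False] .
  have "exp (- r) \<le> discounted_sup \<Gamma> \<phi> k x"
    using discounted_sup_upper[OF k(2) r(3,1), where \<phi> = \<phi>] k(3)[OF r(4)] by simp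
  moreover have "\<forall>\<^sub>F p in nhds (x, w). r < snd p"
    using order_tendstoD(1)[OF tendsto_snd[OF filterlim_ident, of "(x, w)"]] r(2) by simp
  ultimately show ?thesis
  proof (elim eventually_mono, intro impI)
    fix p :: "'a \<times> real" assume "exp (- r) \<le> discounted_sup \<Gamma> \<phi> k x" "r < snd p"
    have "k (\<phi> (snd p, fst p)) \<le> 1" using k(2) by (auto simp: image_subset_iff)
    then have "exp (- snd p) * k (\<phi> (snd p, fst p)) \<le> exp (- snd p)" by (simp add: mult_left_le)
    also have "\<dots> < exp (- r)" using \<open>r < snd p\<close> by simp
    finally show "exp (- snd p) * k (\<phi> (snd p, fst p)) < c"
      using \<open>exp (- r) \<le> discounted_sup \<Gamma> \<phi> k x\<close> c by linarith
  qed
qed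

text \<open>Only the times in the compact interval [0, |ln c'|] matter (later weights are below c'),
  so the tube lemma turns the pointwise bounds of the previous lemma into a uniform one.\<close>
lemma discounted_sup_upper_semicontinuous:
  fixes \<Gamma> :: "(real \<times> 'a::metric_space) set" and \<phi> :: "real \<times> 'a \<Rightarrow> 'a" and k :: "'a \<Rightarrow> real"
  assumes pf: "partial_flow \<Gamma> \<phi>" and N: "compact N"
    and k: "continuous_on UNIV k" "range k \<subseteq> {0..1}" "\<And>y. y \<notin> N \<Longrightarrow> k y = 1"
    and c: "discounted_sup \<Gamma> \<phi> k x < c"
  shows "\<forall>\<^sub>F y in nhds x. discounted_sup \<Gamma> \<phi> k y < c"
proof -
  define c' where "c' = (discounted_sup \<Gamma> \<phi> k x + c) / 2"
  have c': "discounted_sup \<Gamma> \<phi> k x < c'" "c' < c" "0 < c'"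
    using c discounted_sup_nonneg[OF pf k(2), of x] by (simp_all add: c'_def)
  define K where "K = {0..\<bar>ln c'\<bar>}"
  define W where "W = {p. (snd p, fst p) \<in> \<Gamma> \<longrightarrow> exp (- snd p) * k (\<phi> (snd p, fst p)) < c'}"
  have "{x} \<times> K \<subseteq> interior W"
  proof clarify
    fix w assume "w \<in> K"
    then have "\<forall>\<^sub>F p in nhds (x, w). p \<in> W"
      using discounted_sup_upper_bound_near[OF pf N k _ c'(1)] by (simp add: K_def W_def)
    then show "(x, w) \<in> interior W" unfolding eventually_nhds interior_def by blast
  qed
  then obtain X where X: "x \<in> X" "open X" "X \<times> K \<subseteq> interior W"
    using Elementary_Topology.tube_lemma[of K "interior W" x] by (auto simp: K_def)
  from X(2,1) have "\<forall>\<^sub>F y in nhds x. y \<in> X" by (rule eventually_nhds_in_open)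
  then show ?thesis
  proof eventually_elim
    case (elim y)
    have "discounted_sup \<Gamma> \<phi> k y \<le> c'"
    proof (rule discounted_sup_least[OF pf])
      fix v assume v: "(v, y) \<in> \<Gamma>" "0 \<le> v"
      show "exp (- v) * k (\<phi> (v, y)) \<le> c'"
      proof (cases "v \<le> \<bar>ln c'\<bar>")
        case True
        then have "(y, v) \<in> W" using X(3) elim v(2) interior_subset by (fastforce simp: K_def)
        then show ?thesis using v(1) by (simp add: W_def)
      next
        case False
        have "k (\<phi> (v, y)) \<le> 1" using k(2) by (auto simp: image_subset_iff)
        then have "exp (- v) * k (\<phi> (v, y)) \<le> exp (- v)" by (simp add: mult_left_le)
        also have "\<dots> < exp (ln c')" using False by simp
        finally show ?thesis using c'(3) by simp
      qed
    qed
    then show ?case using c'(2) by linarith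
  qed
qed

lemma isCont_discounted_sup:
  fixes \<Gamma> :: "(real \<times> 'a::metric_space) set" and \<phi> :: "real \<times> 'a \<Rightarrow> 'a" and k :: "'a \<Rightarrow> real"
  assumes "partial_flow \<Gamma> \<phi>" "compact N"
    and "continuous_on UNIV k" "range k \<subseteq> {0..1}" "\<And>y. y \<notin> N \<Longrightarrow> k y = 1"
  shows "isCont (discounted_sup \<Gamma> \<phi> k) x"
  unfolding isCont_def tendsto_at_iff_tendsto_nhds
  by (intro order_tendstoI discounted_sup_lower_semicontinuous[OF assms(1,3,4)]
      discounted_sup_upper_semicontinuous[OF assms])

lemma discounted_sup_flow:
  fixes \<Gamma> :: "(real \<times> 'a::metric_space) set" and \<phi> :: "real \<times> 'a \<Rightarrow> 'a" and k :: "'a \<Rightarrow> real"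
  assumes pf: "partial_flow \<Gamma> \<phi>" and tx: "(t, x) \<in> \<Gamma>"
  shows "discounted_sup \<Gamma> \<phi> k (\<phi> (t, x)) =
    (SUP w\<in>{w. (w, x) \<in> \<Gamma> \<and> t \<le> w}. exp t * (exp (- w) * k (\<phi> (w, x))))"
proof -
  have times: "{v. (v, \<phi> (t, x)) \<in> \<Gamma> \<and> 0 \<le> v} = (\<lambda>w. w - t) ` {w. (w, x) \<in> \<Gamma> \<and> t \<le> w}"
  proof (intro set_eqI)
    fix v
    show "v \<in> {v. (v, \<phi> (t, x)) \<in> \<Gamma> \<and> 0 \<le> v} \<longleftrightarrow> v \<in> (\<lambda>w. w - t) ` {w. (w, x) \<in> \<Gamma> \<and> t \<le> w}"
      using partial_flow_mem_flow_iff[OF pf tx, of v] by (auto simp: image_iff intro!: bexI[of _ "v + t"])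
  qed
  have "discounted_sup \<Gamma> \<phi> k (\<phi> (t, x)) =
      (SUP w\<in>{w. (w, x) \<in> \<Gamma> \<and> t \<le> w}. exp (- (w - t)) * k (\<phi> (w - t, \<phi> (t, x))))"
    unfolding discounted_sup_def times by (simp add: image_image)
  also have "\<dots> = (SUP w\<in>{w. (w, x) \<in> \<Gamma> \<and> t \<le> w}. exp t * (exp (- w) * k (\<phi> (w, x))))"
  proof (rule SUP_cong)
    fix w assume "w \<in> {w. (w, x) \<in> \<Gamma> \<and> t \<le> w}"
    then have "(w - t, \<phi> (t, x)) \<in> \<Gamma>" using partial_flow_mem_flow_iff[OF pf tx] by simp
    then show "exp (- (w - t)) * k (\<phi> (w - t, \<phi> (t, x))) = exp t * (exp (- w) * k (\<phi> (w, x)))"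
      using partial_flow_flow_flow[OF pf tx] by (simp flip: exp_add)
  qed simp
  finally show ?thesis .
qed

text \<open>While the orbit stays where k vanishes, moving along it only rescales the weights.\<close>
lemma discounted_sup_flow_quiet:
  fixes \<Gamma> :: "(real \<times> 'a::metric_space) set" and \<phi> :: "real \<times> 'a \<Rightarrow> 'a" and k :: "'a \<Rightarrow> real"
  assumes pf: "partial_flow \<Gamma> \<phi>" and k: "range k \<subseteq> {0..1}"
    and quiet: "\<And>s. \<bar>s\<bar> < \<delta> \<Longrightarrow> (s, x) \<in> \<Gamma> \<and> k (\<phi> (s, x)) = 0" and t: "\<bar>t\<bar> < \<delta>"
  shows "discounted_sup \<Gamma> \<phi> k (\<phi> (t, x)) = exp t * discounted_sup \<Gamma> \<phi> k x"
proof -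
  define G where "G w = exp (- w) * k (\<phi> (w, x))" for w
  define B where "B s = {w. (w, x) \<in> \<Gamma> \<and> s \<le> w}" for s
  have G0: "G w = 0" if "\<bar>w\<bar> < \<delta>" for w using quiet[OF that] by (simp add: G_def)
  have "t \<in> B t" "0 \<in> B 0" using quiet t by (auto simp: B_def)
  have "G w \<in> G ` B 0" if "w \<in> B t" for w
    using that G0[of w] G0[of 0] t \<open>0 \<in> B 0\<close> by (cases "0 \<le> w") (force simp: B_def)+
  moreover have "G w \<in> G ` B t" if "w \<in> B 0" for w
    using that G0[of w] G0[of t] t \<open>t \<in> B t\<close> by (cases "t \<le> w") (force simp: B_def)+
  ultimately have GB: "G ` B t = G ` B 0" by blast
  have "discounted_sup \<Gamma> \<phi> k (\<phi> (t, x)) = Sup ((*) (exp t) ` G ` B t)"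
    using discounted_sup_flow[OF pf, of t x k] quiet t by (simp add: G_def B_def image_image)
  also have "\<dots> = exp t * Sup (G ` B 0)"
  proof (subst GB, rule continuous_at_Sup_mono[symmetric])
    show "mono ((*) (exp t))" by (simp add: mono_def)
    show "continuous (at_left (Sup (G ` B 0))) ((*) (exp t))" by (intro continuous_intros)
    show "G ` B 0 \<noteq> {}" using \<open>0 \<in> B 0\<close> by blast
    show "bdd_above (G ` B 0)" using discounted_sup_bdd_above[OF k] by (simp add: G_def B_def)
  qed
  also have "Sup (G ` B 0) = discounted_sup \<Gamma> \<phi> k x" by (simp add: discounted_sup_def G_def B_def)
  finally show ?thesis .
qed

lemma partial_flow_stays_near:
  assumes pf: "partial_flow \<Gamma> \<phi>" and "open U" "x \<in> U"
  obtains \<delta> where "\<delta> > 0" "\<And>s. \<bar>s\<bar> < \<delta> \<Longrightarrow> (s, x) \<in> \<Gamma> \<and> \<phi> (s, x) \<in> U"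
proof -
  have "isCont (\<lambda>s. \<phi> (s, x)) 0"
    using partial_flow_isCont[OF pf partial_flow_zero_mem[OF pf]]
    by (intro isCont_o2[where f = "\<lambda>s. (s, x)" and g = \<phi>]) (simp_all add: continuous_intros)
  then have "\<forall>\<^sub>F s in nhds 0. \<phi> (s, x) \<in> U"
    using topological_tendstoD[OF isCont_tendsto_nhds] assms(2,3) partial_flow_zero[OF pf] by fastforce
  moreover have "open ((\<lambda>s. (s, x)) -` \<Gamma>)"
    by (rule open_vimage[OF partial_flow_open[OF pf]]) (intro continuous_intros)
  then have "\<forall>\<^sub>F s in nhds 0. (s, x) \<in> \<Gamma>"
    using eventually_nhds_in_open[of "(\<lambda>s. (s, x)) -` \<Gamma>" 0] partial_flow_zero_mem[OF pf] by simp
  ultimately have "\<forall>\<^sub>F s in nhds 0. (s, x) \<in> \<Gamma> \<and> \<phi> (s, x) \<in> U"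
    by (rule eventually_conj[rotated])
  then show ?thesis using that unfolding eventually_nhds_metric by (auto simp: dist_real_def)
qed

section \<open>Catenary functions\<close>

lemma has_orbital_deriv_exp:
  assumes "\<delta> > 0" "\<And>t. \<bar>t\<bar> < \<delta> \<Longrightarrow> f (\<phi> (t, x)) = a * exp t + b * exp (- t)" "\<phi> (0, x) = x"
  shows "has_orbital_deriv \<Gamma> \<phi> N f (a - b) x"
proof -
  define g where "g t = a * exp t + b * exp (- t)" for t :: real
  have "(g has_field_derivative a - b) (at 0)"
    unfolding g_def by (auto intro!: derivative_eq_intros)
  then have "((\<lambda>t. (g t - g 0) / (t - 0)) \<longlongrightarrow> a - b) (at 0)"
    by (simp only: has_field_derivative_iff)
  moreover have "\<forall>\<^sub>F t in at 0. (g t - g 0) / (t - 0) = (f (\<phi> (t, x)) - f x) / t"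
  proof (rule eventually_mono[OF eventually_at_ball[OF assms(1), of 0 UNIV]])
    fix t :: real assume "t \<in> ball 0 \<delta> \<and> t \<in> UNIV"
    then have "\<bar>t\<bar> < \<delta>" by simp
    then show "(g t - g 0) / (t - 0) = (f (\<phi> (t, x)) - f x) / t"
      using assms(2)[of t] assms(2)[of 0] assms(1,3) by (simp add: g_def)
  qed
  ultimately have "((\<lambda>t. (f (\<phi> (t, x)) - f x) / t) \<longlongrightarrow> a - b) (at 0)"
    by (rule Lim_transform_eventually)
  then show ?thesis
    unfolding has_orbital_deriv_def by (rule tendsto_mono[OF at_le[OF subset_UNIV]])
qed

lemma discounted_sup_backward_flow_quiet:
  fixes \<Gamma> :: "(real \<times> 'a::metric_space) set" and \<phi> :: "real \<times> 'a \<Rightarrow> 'a" and k :: "'a \<Rightarrow> real"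
  assumes pf: "partial_flow \<Gamma> \<phi>" and k: "range k \<subseteq> {0..1}"
    and quiet: "\<And>s. \<bar>s\<bar> < \<delta> \<Longrightarrow> (s, x) \<in> \<Gamma> \<and> k (\<phi> (s, x)) = 0" and t: "\<bar>t\<bar> < \<delta>"
  shows "discounted_sup (flip_time -` \<Gamma>) (\<phi> \<circ> flip_time) k (\<phi> (t, x)) =
    exp (- t) * discounted_sup (flip_time -` \<Gamma>) (\<phi> \<circ> flip_time) k x"
proof -
  have "discounted_sup (flip_time -` \<Gamma>) (\<phi> \<circ> flip_time) k ((\<phi> \<circ> flip_time) (- t, x)) =
      exp (- t) * discounted_sup (flip_time -` \<Gamma>) (\<phi> \<circ> flip_time) k x"
    using quiet[of "- _"] t by (intro discounted_sup_flow_quiet[OF partial_flow_flip_time[OF pf] k]) auto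
  then show ?thesis by simp
qed

lemma discounted_sup_add_backward_pos:
  fixes \<Gamma> :: "(real \<times> 'a::metric_space) set" and \<phi> :: "real \<times> 'a \<Rightarrow> 'a" and k :: "'a \<Rightarrow> real"
  assumes pf: "partial_flow \<Gamma> \<phi>" and k: "range k \<subseteq> {0..1}"
    and v: "(v, x) \<in> \<Gamma>" "k (\<phi> (v, x)) = 1"
  shows "0 < discounted_sup \<Gamma> \<phi> k x + discounted_sup (flip_time -` \<Gamma>) (\<phi> \<circ> flip_time) k x"
proof -
  have pf': "partial_flow (flip_time -` \<Gamma>) (\<phi> \<circ> flip_time)" using pf by (rule partial_flow_flip_time)
  have "0 < discounted_sup \<Gamma> \<phi> k x \<or> 0 < discounted_sup (flip_time -` \<Gamma>) (\<phi> \<circ> flip_time) k x"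
  proof (cases "0 \<le> v")
    case True
    then show ?thesis using discounted_sup_pos[OF k v(1) True] v(2) by simp
  next
    case False
    then show ?thesis using discounted_sup_pos[OF k, of "- v" x] v by simp
  qed
  then show ?thesis
    using discounted_sup_nonneg[OF pf k, of x] discounted_sup_nonneg[OF pf' k, of x] by linarith
qed

lemma catenary_function_of_cutoff:
  fixes \<Gamma> :: "(real \<times> 'a::metric_space) set" and \<phi> :: "real \<times> 'a \<Rightarrow> 'a" and k :: "'a \<Rightarrow> real"
  assumes pf: "partial_flow \<Gamma> \<phi>" and inv: "invariant_set \<Gamma> \<phi> \<Lambda>"
    and iso: "isolating_nbhd \<Gamma> \<phi> \<Lambda> N" and iso': "isolating_nbhd \<Gamma> \<phi> \<Lambda> N'"
    and U: "open U" "N' \<subseteq> U" "\<And>y. y \<in> U \<Longrightarrow> k y = 0"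
    and k: "continuous_on UNIV k" "range k \<subseteq> {0..1}" "\<And>y. y \<notin> N \<Longrightarrow> k y = 1"
  shows "catenary_function \<Gamma> \<phi> \<Lambda> N'
    (\<lambda>x. discounted_sup \<Gamma> \<phi> k x + discounted_sup (flip_time -` \<Gamma>) (\<phi> \<circ> flip_time) k x)"
proof -
  define P where "P = discounted_sup \<Gamma> \<phi> k"
  define Q where "Q = discounted_sup (flip_time -` \<Gamma>) (\<phi> \<circ> flip_time) k"
  have pf': "partial_flow (flip_time -` \<Gamma>) (\<phi> \<circ> flip_time)" using pf by (rule partial_flow_flip_time)
  have N: "compact N" and isolates: "\<And>x. (\<lambda>t. \<phi> (t, x)) ` dom_at \<Gamma> x \<subseteq> N \<Longrightarrow> x \<in> \<Lambda>"
    using iso by (auto simp: isolating_nbhd_def)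
  have "\<Lambda> \<subseteq> U" using iso' U(2) interior_subset by (fastforce simp: isolating_nbhd_def)
  have "continuous_on N' (\<lambda>x. P x + Q x)"
    unfolding P_def Q_def
    by (intro continuous_at_imp_continuous_on ballI continuous_intros
        isCont_discounted_sup[OF pf N k] isCont_discounted_sup[OF pf' N k])
  moreover have "P x + Q x = 0" if "x \<in> \<Lambda>" for x
  proof -
    have "k (\<phi> (v, x)) = 0" if "(v, x) \<in> \<Gamma>" for v
      using inv \<open>x \<in> \<Lambda>\<close> that \<open>\<Lambda> \<subseteq> U\<close> U(3) by (auto simp: invariant_set_def dom_at_def)
    then show ?thesis
      unfolding P_def Q_def using discounted_sup_eq_0[OF pf k(2)] discounted_sup_eq_0[OF pf' k(2)] by simp
  qed
  moreover have "0 < P x + Q x" if x: "x \<in> N' - \<Lambda>" for x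
  proof -
    have "\<not> (\<lambda>t. \<phi> (t, x)) ` dom_at \<Gamma> x \<subseteq> N" using isolates x by blast
    then obtain v where "(v, x) \<in> \<Gamma>" "k (\<phi> (v, x)) = 1"
      using k(3) by (auto simp: dom_at_def)
    then show ?thesis unfolding P_def Q_def by (rule discounted_sup_add_backward_pos[OF pf k(2)])
  qed
  moreover have "has_orbital_deriv \<Gamma> \<phi> N' (\<lambda>x. P x + Q x) (P x - Q x) x \<and>
      has_orbital_deriv \<Gamma> \<phi> N' (\<lambda>x. P x - Q x) (P x + Q x) x" if "x \<in> N'" for x
  proof -
    from \<open>x \<in> N'\<close> U(2) have "x \<in> U" by blast
    then obtain \<delta> where \<delta>: "\<delta> > 0" "\<And>s. \<bar>s\<bar> < \<delta> \<Longrightarrow> (s, x) \<in> \<Gamma> \<and> \<phi> (s, x) \<in> U"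
      using partial_flow_stays_near[OF pf U(1)] by blast
    then have quiet: "\<And>s. \<bar>s\<bar> < \<delta> \<Longrightarrow> (s, x) \<in> \<Gamma> \<and> k (\<phi> (s, x)) = 0" using U(3) by blast
    have "P (\<phi> (t, x)) = exp t * P x" "Q (\<phi> (t, x)) = exp (- t) * Q x" if "\<bar>t\<bar> < \<delta>" for t
      unfolding P_def Q_def
      using discounted_sup_flow_quiet[OF pf k(2) quiet that]
        discounted_sup_backward_flow_quiet[OF pf k(2) quiet that] by simp_all
    then show ?thesis
      using has_orbital_deriv_exp[OF \<delta>(1), of "\<lambda>x. P x + Q x" \<phi> x "P x" "Q x" \<Gamma> N']
        has_orbital_deriv_exp[OF \<delta>(1), of "\<lambda>x. P x - Q x" \<phi> x "P x" "- Q x" \<Gamma> N']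
        partial_flow_zero[OF pf]
      by (simp add: algebra_simps)
  qed
  ultimately show ?thesis
    unfolding catenary_function_def P_def[symmetric] Q_def[symmetric]
    by (intro conjI iso' exI[of _ "\<lambda>x. P x - Q x"]) blast+
qed

theorem mainTheorem9:
  fixes \<Gamma> :: "(real \<times> 'a::metric_space) set" and \<phi> :: "real \<times> 'a \<Rightarrow> 'a" and \<Lambda> :: "'a set"
  assumes "partial_flow \<Gamma> \<phi>"
    and "isolated_set \<Gamma> \<phi> \<Lambda>"
  shows "\<exists>N L. catenary_function \<Gamma> \<phi> \<Lambda> N L"
proof -
  obtain N where inv: "invariant_set \<Gamma> \<phi> \<Lambda>" and iso: "isolating_nbhd \<Gamma> \<phi> \<Lambda> N"
    using assms(2) by (auto simp: isolated_set_def)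
  then have "compact \<Lambda>" by (rule isolated_invariant_compact[OF assms(1)])
  obtain N' U and k :: "'a \<Rightarrow> real" where "isolating_nbhd \<Gamma> \<phi> \<Lambda> N'" "open U" "N' \<subseteq> U"
    "\<And>y. y \<in> U \<Longrightarrow> k y = 0" "continuous_on UNIV k" "range k \<subseteq> {0..1}" "\<And>y. y \<notin> N \<Longrightarrow> k y = 1"
    using isolating_nbhd_cutoff[OF iso \<open>compact \<Lambda>\<close>] by blast
  from catenary_function_of_cutoff[OF assms(1) inv iso this] show ?thesis by blast
qed

end
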